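(* Let $k\ge 3$ be odd and let $G$ be a $k$-uniform hypercycle of size $r\ge 2$, with Laplacian tensor $\mathcal L$. Then $\lambda(\mathcal L)=2$.
   Context: A $k$-uniform hypercycle of size $d$ has vertex set $\{i_{j,s}: j\in[d], s\in[k-1]\}$ (all distinct) and edge set $\{\{i_{j,1},\ldots,i_{j,k-1},i_{j+1,1}\}: j\in[d]\}$ where $i_{d+1,1}:=i_{1,1}$. For a $k$-uniform hypergraph $G=(V,E)$ with $V=[n]$ and $d_i$ the number of edges containing $i$, the Laplacian tensor $\mathcal L=\mathcal D-\mathcal A$ ($\mathcal D$ diagonal with entries $d_i$, $\mathcal A$ with entries $\frac1{(k-1)!}$ at index tuples forming an edge and $0$ otherwise) satisfies $(\mathcal L\mathbf x^{k-1})_i=d_ix_i^{k-1}-\sum_{e\in E,\,i\in e}\prod_{s\in e\setminus\{i\}}x_s$. A real $\lambda$ is an H-eigenvalue of $\mathcal L$ if some nonzero $\mathbf x\in\mathbb R^n$ satisfies $(\mathcal L\mathbf x^{k-1})_i=\lambda x_i^{k-1}$ for all $i$; $\lambda(\mathcal L)$ is the largest H-eigenvalue. *)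

theory Defs
  imports Complex_Main
begin

text \<open>A hypergraph on vertex set [n] = {1..n} is given by its edge set E (a set of
  vertex sets).\<close>

definition degree :: "nat set set \<Rightarrow> nat \<Rightarrow> nat" where
  "degree E i = card {e \<in> E. i \<in> e}"

text \<open>The i-th component of L x^(k-1), for the Laplacian tensor L = D - A of the
  k-uniform hypergraph (vertex set [n], edges E).\<close>
definition laplacian_apply :: "nat \<Rightarrow> nat set set \<Rightarrow> (nat \<Rightarrow> real) \<Rightarrow> nat \<Rightarrow> real" where
  "laplacian_apply k E x i =
     real (degree E i) * x i ^ (k - 1) - (\<Sum>e\<in>{e \<in> E. i \<in> e}. \<Prod>s\<in>e - {i}. x s)"

definition is_H_eigenvalue :: "nat \<Rightarrow> nat \<Rightarrow> nat set set \<Rightarrow> real \<Rightarrow> bool" where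
  "is_H_eigenvalue k n E lam \<longleftrightarrow>
     (\<exists>x :: nat \<Rightarrow> real. (\<exists>i\<in>{1..n}. x i \<noteq> 0) \<and>
        (\<forall>i\<in>{1..n}. laplacian_apply k E x i = lam * x i ^ (k - 1)))"

definition largest_H_eigenvalue :: "nat \<Rightarrow> nat \<Rightarrow> nat set set \<Rightarrow> real" where
  "largest_H_eigenvalue k n E = (GREATEST lam. is_H_eigenvalue k n E lam)"

text \<open>E on vertex set [n] is a k-uniform hypercycle of size d: the vertices are
  labelled bijectively as i_{j,s} (j in [d], s in [k-1]) and the edges are
  {i_{j,1},...,i_{j,k-1}, i_{j+1,1}} for j in [d], with i_{d+1,1} = i_{1,1}.\<close>
definition is_hypercycle :: "nat \<Rightarrow> nat \<Rightarrow> nat \<Rightarrow> nat set set \<Rightarrow> bool" where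
  "is_hypercycle k d n E \<longleftrightarrow>
     (\<exists>f :: nat \<times> nat \<Rightarrow> nat.
        bij_betw f ({1..d} \<times> {1..k-1}) {1..n} \<and>
        E = (\<lambda>j. f ` ({j} \<times> {1..k-1}) \<union> {f (if j = d then 1 else j + 1, 1)}) ` {1..d})"

end

theory Submission
  imports Defs
begin

text \<open>The indicator vector of a vertex of degree two is an H-eigenvector for 2.
  Conversely, let x be an H-eigenvector for \<lambda> > 2. Multiplying the equation at a vertex v by
  x_v turns every product into a full edge product. At the degree-one vertices of edge j this
  gives (1 - \<lambda>) x_v^k = the edge product, so (k being odd) they all carry one value b_j. With
  a_j the value at the junction vertex i_{j,1} and t = \<lambda> - 1 the system becomes
  a_j a_{j+1} = -t b_j^2 (if b_j \<noteq> 0) and (t - 1) a_j^k = t (b_{j-1}^k + b_j^k).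
  At an index where |a_j| is maximal, say a_j > 0, one of b_j, b_{j-1} is positive, and two
  steps around the cycle in that direction reach a strictly larger |a|. So all a_j vanish,
  hence all b_j, and x = 0.\<close>

locale cycle_equations =
  fixes k :: nat and t :: real and J :: "'i set" and nx pv :: "'i \<Rightarrow> 'i"
    and a b :: "'i \<Rightarrow> real"
  assumes odd_k: "odd k" and t_gt_1: "t > 1"
    and nx_in: "j \<in> J \<Longrightarrow> nx j \<in> J" and pv_in: "j \<in> J \<Longrightarrow> pv j \<in> J"
    and nx_pv: "j \<in> J \<Longrightarrow> nx (pv j) = j" and pv_nx: "j \<in> J \<Longrightarrow> pv (nx j) = j"
    and prod_nx: "j \<in> J \<Longrightarrow> b j \<noteq> 0 \<Longrightarrow> a j * a (nx j) = - t * (b j)\<^sup>2"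
    and power_sum: "j \<in> J \<Longrightarrow> (t - 1) * a j ^ k = t * (b (pv j) ^ k + b j ^ k)"
begin

text \<open>Two consecutive steps along the cycle starting at a positive value \<open>a0\<close> with \<open>b0 > 0\<close>:
  the sign of \<open>a1\<close> forces \<open>|b1| > b0\<close>, and then \<open>|a1| |a2| = t b1\<^sup>2 > t b0\<^sup>2 = |a1| a0\<close>.\<close>
lemma step_exceeds:
  fixes a0 a1 a2 b0 b1 :: real
  assumes "a0 > 0" "b0 > 0"
    and e01: "a0 * a1 = - t * b0\<^sup>2"
    and e12: "b1 \<noteq> 0 \<Longrightarrow> a1 * a2 = - t * b1\<^sup>2"
    and p1: "(t - 1) * a1 ^ k = t * (b0 ^ k + b1 ^ k)"
  shows "a0 < \<bar>a2\<bar>"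
proof -
  have "a0 * a1 < 0" using e01 t_gt_1 \<open>b0 > 0\<close> by simp
  hence a1: "a1 < 0" using \<open>a0 > 0\<close> by (simp add: mult_less_0_iff)
  hence "(t - 1) * a1 ^ k < 0" using t_gt_1 odd_k by (simp add: mult_pos_neg)
  hence "t * (b0 ^ k + b1 ^ k) < 0" using p1 by simp
  hence "b1 ^ k < (- b0) ^ k" using t_gt_1 odd_k by (simp add: mult_less_0_iff)
  hence "b1 < - b0" using power_mono_odd[OF odd_k, of "- b0" b1] by linarith
  hence "b0\<^sup>2 < b1\<^sup>2" "b1 \<noteq> 0" using \<open>b0 > 0\<close> power_strict_mono[of b0 "- b1" 2] by auto
  have "\<bar>a1\<bar> * a0 = t * b0\<^sup>2" using e01 a1 by (simp add: algebra_simps)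
  also have "\<dots> < t * b1\<^sup>2" using \<open>b0\<^sup>2 < b1\<^sup>2\<close> t_gt_1 by simp
  also have "\<dots> = \<bar>a1 * a2\<bar>" using e12 \<open>b1 \<noteq> 0\<close> t_gt_1 by simp
  also have "\<dots> = \<bar>a1\<bar> * \<bar>a2\<bar>" by (rule abs_mult)
  finally show ?thesis using a1 by (simp add: mult_less_cancel_left)
qed

lemma max_not_positive:
  assumes j0: "j0 \<in> J" and pos: "a j0 > 0" and max: "\<And>j. j \<in> J \<Longrightarrow> \<bar>a j\<bar> \<le> a j0"
  shows False
proof -
  have "0 < (t - 1) * a j0 ^ k" using pos t_gt_1 by simp
  hence "0 < b (pv j0) ^ k + b j0 ^ k"
    using power_sum[OF j0] t_gt_1 by (simp add: zero_less_mult_iff)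
  hence "b j0 > 0 \<or> b (pv j0) > 0"
    using power_le_zero_eq[of "b j0" k] power_le_zero_eq[of "b (pv j0)" k] odd_k odd_pos[OF odd_k]
    by (smt (verit))
  then show False
  proof
    assume "b j0 > 0"
    let ?j1 = "nx j0"
    have "a j0 < \<bar>a (nx ?j1)\<bar>"
    proof (rule step_exceeds[OF pos \<open>b j0 > 0\<close>])
      show "a j0 * a ?j1 = - t * (b j0)\<^sup>2" using prod_nx[OF j0] \<open>b j0 > 0\<close> by simp
      show "b ?j1 \<noteq> 0 \<Longrightarrow> a ?j1 * a (nx ?j1) = - t * (b ?j1)\<^sup>2" using prod_nx nx_in j0 by blast
      show "(t - 1) * a ?j1 ^ k = t * (b j0 ^ k + b ?j1 ^ k)"
        using power_sum[OF nx_in[OF j0]] pv_nx[OF j0] by simp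
    qed
    thus False using max[OF nx_in[OF nx_in[OF j0]]] by simp
  next
    assume "b (pv j0) > 0"
    let ?j1 = "pv j0"
    have "a j0 < \<bar>a (pv ?j1)\<bar>"
    proof (rule step_exceeds[OF pos \<open>b ?j1 > 0\<close>])
      show "a j0 * a ?j1 = - t * (b ?j1)\<^sup>2"
        using prod_nx[OF pv_in[OF j0]] nx_pv[OF j0] \<open>b ?j1 > 0\<close> by (simp add: mult.commute)
      show "b (pv ?j1) \<noteq> 0 \<Longrightarrow> a ?j1 * a (pv ?j1) = - t * (b (pv ?j1))\<^sup>2"
        using prod_nx[OF pv_in[OF pv_in[OF j0]]] nx_pv[OF pv_in[OF j0]] by (simp add: mult.commute)
      show "(t - 1) * a ?j1 ^ k = t * (b ?j1 ^ k + b (pv ?j1) ^ k)"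
        using power_sum[OF pv_in[OF j0]] by simp
    qed
    thus False using max[OF pv_in[OF pv_in[OF j0]]] by simp
  qed
qed

lemma negated: "cycle_equations k t J nx pv (\<lambda>j. - a j) (\<lambda>j. - b j)"
  using odd_k t_gt_1 nx_in pv_in nx_pv pv_nx prod_nx power_sum
  by unfold_locales (auto simp: algebra_simps)

lemma a_zero:
  assumes "finite J" and "j \<in> J" shows "a j = 0"
proof (rule ccontr)
  assume "a j \<noteq> 0"
  obtain j0 where j0: "j0 \<in> J" "\<bar>a j0\<bar> = Max ((\<lambda>j. \<bar>a j\<bar>) ` J)"
    using Max_in[of "(\<lambda>j. \<bar>a j\<bar>) ` J"] \<open>finite J\<close> \<open>j \<in> J\<close>
    by (metis empty_iff finite_imageI image_iff)
  have max: "\<bar>a i\<bar> \<le> \<bar>a j0\<bar>" if "i \<in> J" for i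
    using j0(2) \<open>finite J\<close> that by simp
  have "a j0 \<noteq> 0" using max[OF \<open>j \<in> J\<close>] \<open>a j \<noteq> 0\<close> by auto
  then consider "a j0 > 0" | "- a j0 > 0" by linarith
  then show False
  proof cases
    case 1
    then show False using max_not_positive[OF j0(1)] max by fastforce
  next
    case 2
    then show False using cycle_equations.max_not_positive[OF negated j0(1)] max by fastforce
  qed
qed

end

lemma laplacian_apply_times:
  assumes "k \<ge> 1" and "\<forall>e\<in>E. finite e"
  shows "x i * laplacian_apply k E x i
    = real (degree E i) * x i ^ k - (\<Sum>e\<in>{e \<in> E. i \<in> e}. prod x e)"
proof -
  have "x i * x i ^ (k - 1) = x i ^ k"
    using \<open>k \<ge> 1\<close> by (metis Suc_diff_le diff_Suc_1 power_Suc)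
  moreover have "x i * (\<Prod>s\<in>e - {i}. x s) = prod x e" if "e \<in> E" "i \<in> e" for e
    using prod.remove[of e i x] assms(2) that by simp
  ultimately show ?thesis
    unfolding laplacian_apply_def right_diff_distrib sum_distrib_left
    by (simp add: algebra_simps)
qed

locale hypercycle_labelling =
  fixes k r :: nat and f :: "nat \<times> nat \<Rightarrow> nat"
  assumes k_ge_3: "k \<ge> 3" and r_ge_2: "r \<ge> 2" and inj_f: "inj_on f ({1..r} \<times> {1..k-1})"
begin

definition nxt :: "nat \<Rightarrow> nat" where "nxt j = (if j = r then 1 else j + 1)"
definition prv :: "nat \<Rightarrow> nat" where "prv j = (if j = 1 then r else j - 1)"
definition edge :: "nat \<Rightarrow> nat set" where "edge j = f ` ({j} \<times> {1..k-1}) \<union> {f (nxt j, 1)}"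

abbreviation edges :: "nat set set" where "edges \<equiv> edge ` {1..r}"

lemma
  assumes "j \<in> {1..r}"
  shows nxt_in: "nxt j \<in> {1..r}" and prv_in: "prv j \<in> {1..r}"
    and nxt_prv: "nxt (prv j) = j" and prv_nxt: "prv (nxt j) = j" and nxt_neq: "nxt j \<noteq> j"
  using assms r_ge_2 by (auto simp: nxt_def prv_def)

lemma f_eq_iff:
  assumes "j \<in> {1..r}" "j' \<in> {1..r}" "s \<in> {1..k-1}" "s' \<in> {1..k-1}"
  shows "f (j, s) = f (j', s') \<longleftrightarrow> j = j' \<and> s = s'"
  using inj_f assms unfolding inj_on_def by blast

lemma mem_edge_iff:
  assumes "j \<in> {1..r}" "j' \<in> {1..r}" "s \<in> {1..k-1}"
  shows "f (j', s) \<in> edge j \<longleftrightarrow> j' = j \<or> (j' = nxt j \<and> s = 1)"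
  using assms nxt_in[OF assms(1)] k_ge_3 unfolding edge_def by (auto simp: f_eq_iff)

lemma edge_inj:
  assumes "j \<in> {1..r}" "j' \<in> {1..r}" "edge j = edge j'"
  shows "j = j'"
  using mem_edge_iff[of j j 2] mem_edge_iff[of j' j 2] assms k_ge_3 by auto

lemma edges_containing_inner:
  assumes "j \<in> {1..r}" "s \<in> {2..k-1}"
  shows "{e \<in> edges. f (j, s) \<in> e} = {edge j}"
  using mem_edge_iff[OF _ assms(1)] assms by auto

lemma edges_containing_junction:
  assumes "j \<in> {1..r}"
  shows "{e \<in> edges. f (j, 1) \<in> e} = {edge j, edge (prv j)}"
proof -
  have "f (j, 1) \<in> edge j' \<longleftrightarrow> j' = j \<or> j' = prv j" if "j' \<in> {1..r}" for j'
    using mem_edge_iff[OF that assms, of 1] k_ge_3 nxt_prv[OF assms] prv_nxt[OF that] by auto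
  then show ?thesis using assms prv_in[OF assms] by auto
qed

lemma edge_prv_neq: "j \<in> {1..r} \<Longrightarrow> edge (prv j) \<noteq> edge j"
  using edge_inj prv_in nxt_prv nxt_neq by metis

lemma edge_insert:
  assumes "j \<in> {1..r}"
  shows "edge j = insert (f (j, 1)) (insert (f (nxt j, 1)) ((\<lambda>s. f (j, s)) ` {2..k-1}))"
    and "f (j, 1) \<notin> insert (f (nxt j, 1)) ((\<lambda>s. f (j, s)) ` {2..k-1})"
    and "f (nxt j, 1) \<notin> (\<lambda>s. f (j, s)) ` {2..k-1}"
    and "inj_on (\<lambda>s. f (j, s)) {2..k-1}"
proof -
  have "{1..k-1} = insert 1 {2..k-1}" using k_ge_3 by auto
  then show "edge j = insert (f (j, 1)) (insert (f (nxt j, 1)) ((\<lambda>s. f (j, s)) ` {2..k-1}))"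
    unfolding edge_def by auto
  show "f (j, 1) \<notin> insert (f (nxt j, 1)) ((\<lambda>s. f (j, s)) ` {2..k-1})"
    "f (nxt j, 1) \<notin> (\<lambda>s. f (j, s)) ` {2..k-1}" "inj_on (\<lambda>s. f (j, s)) {2..k-1}"
    using f_eq_iff[OF assms] f_eq_iff[OF nxt_in[OF assms]] nxt_in[OF assms] nxt_neq[OF assms]
      assms k_ge_3 by (auto simp: inj_on_def)
qed

lemma finite_edge: "finite (edge j)"
  by (simp add: edge_def)

lemma card_edge: "j \<in> {1..r} \<Longrightarrow> card (edge j) = k"
  using edge_insert[of j] card_image[of "\<lambda>s. f (j, s)" "{2..k-1}"] k_ge_3 by simp

lemma prod_edge:
  assumes "j \<in> {1..r}"
  shows "prod x (edge j) = x (f (j, 1)) * x (f (nxt j, 1)) * (\<Prod>s\<in>{2..k-1}. x (f (j, s)))"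
  using edge_insert[OF assms] prod.reindex[of "\<lambda>s. f (j, s)" "{2..k-1}" x]
  by (simp add: mult.assoc)

lemma degree_junction:
  assumes "j \<in> {1..r}" shows "degree edges (f (j, 1)) = 2"
  using edges_containing_junction[OF assms] edge_prv_neq[OF assms] unfolding degree_def by simp

text \<open>Every edge has \<open>k \<ge> 3\<close> vertices, so for the indicator vector of a vertex each product
  over \<open>e - {v}\<close> contains a vanishing factor.\<close>
lemma H_eigenvalue_2:
  assumes "bij_betw f ({1..r} \<times> {1..k-1}) {1..n}"
  shows "is_H_eigenvalue k n edges 2"
proof -
  define c where "c = f (1, 1)"
  define x :: "nat \<Rightarrow> real" where "x v = (if v = c then 1 else 0)" for v
  have c_in: "c \<in> {1..n}" using assms k_ge_3 r_ge_2 unfolding c_def bij_betw_def by auto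
  have prod_zero: "prod x (e - {v}) = 0" if "e \<in> edges" for e v
  proof -
    from that obtain j where "j \<in> {1..r}" "e = edge j" by blast
    then have "card (e - {v}) \<ge> 2" "finite e"
      using card_edge k_ge_3 finite_edge card_Diff_singleton_if[of e v] by auto
    then have "\<not> e - {v} \<subseteq> {c}" using card_mono[of "{c}" "e - {v}"] by auto
    then obtain w where "w \<in> e - {v}" "w \<noteq> c" by blast
    then show ?thesis using \<open>finite e\<close> by (auto simp: x_def prod_zero_iff)
  qed
  have "laplacian_apply k edges x i = 2 * x i ^ (k - 1)" for i
  proof -
    have "degree edges c = 2" unfolding c_def using degree_junction r_ge_2 by simp
    then show ?thesis unfolding laplacian_apply_def using prod_zero k_ge_3 by (simp add: x_def)
  qed
  moreover have "x c \<noteq> 0" by (simp add: x_def)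
  ultimately show ?thesis unfolding is_H_eigenvalue_def using c_in by blast
qed

end

locale hypercycle_eigenvector = hypercycle_labelling +
  fixes n :: nat and x :: "nat \<Rightarrow> real" and lam :: real
  assumes bij_f: "bij_betw f ({1..r} \<times> {1..k-1}) {1..n}"
    and eigen: "i \<in> {1..n} \<Longrightarrow> laplacian_apply k edges x i = lam * x i ^ (k - 1)"
    and odd_k: "odd k" and lam_gt_2: "lam > 2"
begin

definition a :: "nat \<Rightarrow> real" where "a j = x (f (j, 1))"
definition b :: "nat \<Rightarrow> real" where "b j = x (f (j, 2))"

lemma eigen_times:
  assumes "j \<in> {1..r}" "s \<in> {1..k-1}"
  shows "(real (degree edges (f (j, s))) - lam) * x (f (j, s)) ^ k
    = (\<Sum>e\<in>{e \<in> edges. f (j, s) \<in> e}. prod x e)"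
proof -
  have "f (j, s) \<in> {1..n}" using bij_f assms unfolding bij_betw_def by auto
  moreover have "x v * (lam * x v ^ (k - 1)) = lam * x v ^ k" for v
    using k_ge_3 by (cases k) auto
  ultimately have "x (f (j, s)) * laplacian_apply k edges x (f (j, s)) = lam * x (f (j, s)) ^ k"
    using eigen by simp
  then show ?thesis
    using laplacian_apply_times[of k edges x "f (j, s)"] k_ge_3 finite_edge
    by (simp add: left_diff_distrib)
qed

lemma inner_equation:
  assumes "j \<in> {1..r}" "s \<in> {2..k-1}"
  shows "(1 - lam) * x (f (j, s)) ^ k = prod x (edge j)"
  using eigen_times[of j s] edges_containing_inner[OF assms] assms by (simp add: degree_def)

lemma inner_eq_b:
  assumes "j \<in> {1..r}" "s \<in> {2..k-1}"
  shows "x (f (j, s)) = b j"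
proof -
  have "(1 - lam) * x (f (j, s)) ^ k = (1 - lam) * b j ^ k"
    using inner_equation[OF assms] inner_equation[OF assms(1), of 2] k_ge_3 unfolding b_def by simp
  then have "x (f (j, s)) ^ k = b j ^ k" using lam_gt_2 by simp
  then show ?thesis using odd_k by (metis odd_real_root_power_cancel)
qed

lemma junction_equation:
  assumes "j \<in> {1..r}"
  shows "(2 - lam) * a j ^ k = prod x (edge j) + prod x (edge (prv j))"
  using eigen_times[of j 1] edges_containing_junction[OF assms] degree_junction[OF assms]
    edge_prv_neq[OF assms] assms k_ge_3 unfolding a_def by (simp add: add.commute)

lemma prod_edge_ab: "j \<in> {1..r} \<Longrightarrow> prod x (edge j) = a j * a (nxt j) * b j ^ (k - 2)"
  using prod_edge[of j x] inner_eq_b unfolding a_def by (simp add: numeral_2_eq_2)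

lemma cycle_equations: "cycle_equations k (lam - 1) {1..r} nxt prv a b"
proof unfold_locales
  fix j assume j: "j \<in> {1..r}"
  have two: "2 \<in> {2..k-1}" using k_ge_3 by simp
  have "k - 2 + 2 = k" using k_ge_3 by simp
  then have "b j ^ k = b j ^ (k - 2) * (b j)\<^sup>2" by (metis power_add)
  moreover have "a j * a (nxt j) * b j ^ (k - 2) = (1 - lam) * b j ^ k"
    using prod_edge_ab[OF j] inner_equation[OF j two] unfolding b_def by simp
  ultimately have "a j * a (nxt j) * b j ^ (k - 2) = - (lam - 1) * (b j)\<^sup>2 * b j ^ (k - 2)"
    by (simp add: algebra_simps)
  then show "b j \<noteq> 0 \<Longrightarrow> a j * a (nxt j) = - (lam - 1) * (b j)\<^sup>2" by simp
  show "(lam - 1 - 1) * a j ^ k = (lam - 1) * (b (prv j) ^ k + b j ^ k)"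
    using junction_equation[OF j] inner_equation[OF j two] inner_equation[OF prv_in[OF j] two]
    unfolding b_def by (simp add: algebra_simps)
qed (use odd_k lam_gt_2 nxt_in prv_in nxt_prv prv_nxt in auto)

lemma eigenvector_zero:
  assumes "i \<in> {1..n}" shows "x i = 0"
proof -
  have "i \<in> f ` ({1..r} \<times> {1..k-1})" using assms bij_f by (simp add: bij_betw_def)
  then obtain j s where js: "j \<in> {1..r}" "s \<in> {1..k-1}" "i = f (j, s)" by blast
  have a_zero: "a j = 0" using cycle_equations.a_zero[OF cycle_equations _ js(1)] by simp
  have "b j = 0"
    using cycle_equations.prod_nx[OF cycle_equations js(1)] a_zero lam_gt_2 by fastforce
  then show ?thesis
    using js a_zero inner_eq_b[OF js(1), of s] unfolding a_def by (cases "s = 1") auto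
qed

end

context hypercycle_labelling
begin

lemma H_eigenvalue_le_2:
  assumes "bij_betw f ({1..r} \<times> {1..k-1}) {1..n}" and "odd k"
    and "is_H_eigenvalue k n edges lam"
  shows "lam \<le> 2"
proof (rule ccontr)
  assume "\<not> lam \<le> 2"
  obtain x where nonzero: "\<exists>i\<in>{1..n}. x i \<noteq> 0"
    and eigen: "\<forall>i\<in>{1..n}. laplacian_apply k edges x i = lam * x i ^ (k - 1)"
    using assms(3) unfolding is_H_eigenvalue_def by blast
  interpret hypercycle_eigenvector k r f n x lam
    using assms \<open>\<not> lam \<le> 2\<close> eigen by unfold_locales auto
  show False using nonzero eigenvector_zero by blast
qed

end

theorem proposition4p1:
  fixes k r n :: nat and E :: "nat set set"
  assumes "odd k" and "k \<ge> 3" and "r \<ge> 2"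
    and "is_hypercycle k r n E"
  shows "largest_H_eigenvalue k n E = 2"
proof -
  obtain f where bij: "bij_betw f ({1..r} \<times> {1..k-1}) {1..n}"
    and E: "E = (\<lambda>j. f ` ({j} \<times> {1..k-1}) \<union> {f (if j = r then 1 else j + 1, 1)}) ` {1..r}"
    using assms(4) unfolding is_hypercycle_def by blast
  interpret hypercycle_labelling k r f
    using assms(2,3) bij by unfold_locales (auto simp: bij_betw_def)
  have "E = edges" unfolding E edge_def nxt_def ..
  then show ?thesis
    unfolding largest_H_eigenvalue_def
    using H_eigenvalue_2[OF bij] H_eigenvalue_le_2[OF bij assms(1)] by (auto intro: Greatest_equality)
qed

end
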